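(* Let $n\ge2$ and $0<c\le\frac1{\sqrt n}$. Set $\delta=\frac1n+\frac{\sqrt{(n-1)(c^2-c^4)}}{n(c^2-1)}$. Then $0\le\delta<\frac1n$, and with $B=I-\delta e^{n\times n}$ having columns $b_1,\dots,b_n$ and $\alpha=\frac1{\sqrt{\delta^2n-2\delta+1}}$, the set $\{\alpha b_1,\dots,\alpha b_n,-\alpha b_1,\dots,-\alpha b_n\}$ is a positive basis of $\mathbb R^n$ with cosine measure $c$.
   Context: $e^{n\times n}$ is the $n\times n$ all-ones matrix. A finite set $\mathcal P$ is a positive basis if its positive span $\{\sum\lambda_id_i:\lambda_i\ge0\}$ is $\mathbb R^n$ and no $d\in\mathcal P$ lies in the positive span of $\mathcal P\setminus\{d\}$. The cosine measure of a finite $\mathcal S\subset\mathbb R^n\setminus\{\mathbf 0\}$ is $\min_{\|u\|=1}\max_{d\in\mathcal S}\frac{d^\top u}{\|d\|}$. *)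

theory Defs
  imports "HOL-Analysis.Analysis"
begin

definition pos_span :: "('a::real_vector) set \<Rightarrow> 'a set" where
  "pos_span S = {x. \<exists>w. (\<forall>d\<in>S. 0 \<le> w d) \<and> x = (\<Sum>d\<in>S. w d *\<^sub>R d)}"

definition positive_basis :: "('a::real_vector) set \<Rightarrow> bool" where
  "positive_basis P \<longleftrightarrow> finite P \<and> pos_span P = UNIV \<and>
     (\<forall>d\<in>P. d \<notin> pos_span (P - {d}))"

definition cosine_measure :: "('a::real_inner) set \<Rightarrow> real" where
  "cosine_measure S = (INF u\<in>{u. norm u = 1}. Max ((\<lambda>d. inner d u / norm d) ` S))"

definition ones_mat :: "real^'n^'n" where
  "ones_mat = (\<chi> i j. 1)"

definition col :: "'n \<Rightarrow> 'a^'n^'m \<Rightarrow> 'a^'m" where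
  "col j A = (\<chi> i. A $ i $ j)"

end

theory Submission
  imports Defs
begin

text \<open>
  If \<open>b\<^sub>1, \<dots>, b\<^sub>n\<close> is any basis, then \<open>{\<plusminus>b\<^sub>i}\<close> is a positive basis: a vector is
  reached by splitting its coordinates into positive and negative parts, and uniqueness of
  coordinates rules out a positive dependency. The columns of \<open>B = I - \<delta>J\<close> form a basis
  because \<open>B\<close> is invertible when \<open>y = 1 - n\<delta> \<noteq> 0\<close>.

  Since \<open>\<langle>b\<^sub>j, u\<rangle> = (Bu)\<^sub>j\<close> and \<open>B\<close> is the identity on the orthogonal complement of
  \<open>(1,\<dots>,1)\<close> and multiplication by \<open>y \<in> (0,1]\<close> on \<open>(1,\<dots>,1)\<close>, every unit \<open>u\<close> has
  \<open>\<parallel>Bu\<parallel> \<ge> y\<close>, so some coordinate of \<open>Bu\<close> has modulus at least \<open>y/\<surd>n\<close>; the uniform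
  vector attains this bound in every coordinate. Hence the cosine measure of the normalized
  \<open>\<plusminus>\<close>-columns is \<open>y / \<surd>(n\<parallel>b\<^sub>j\<parallel>\<^sup>2) = y / \<surd>(y\<^sup>2 + n - 1)\<close>, and the stated \<open>\<delta>\<close> solves
  \<open>y\<^sup>2 (1 - c\<^sup>2) = c\<^sup>2 (n - 1)\<close>, i.e. makes this value equal to \<open>c\<close>.
\<close>

lemma pos_spanI:
  assumes "\<forall>d\<in>S. 0 \<le> w d" and "(\<Sum>d\<in>S. w d *\<^sub>R d) = x"
  shows "x \<in> pos_span S"
  using assms unfolding pos_span_def by auto

lemma pos_spanE:
  assumes "x \<in> pos_span S"
  obtains w where "\<forall>d\<in>S. 0 \<le> w d" and "(\<Sum>d\<in>S. w d *\<^sub>R d) = x"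
  using assms unfolding pos_span_def by auto

definition coordinate_basis :: "('i::finite \<Rightarrow> 'a::real_vector) \<Rightarrow> bool" where
  "coordinate_basis f \<longleftrightarrow> (\<forall>x. \<exists>!l. x = (\<Sum>j\<in>UNIV. l j *\<^sub>R f j))"

lemma sum_if_eq_scaleR:
  fixes f :: "'i::finite \<Rightarrow> 'a::real_vector"
  shows "(\<Sum>j\<in>UNIV. (if j = a then t else 0) *\<^sub>R f j) = t *\<^sub>R f a"
  by (simp add: if_distrib[of "\<lambda>s. s *\<^sub>R _"] cong: if_cong)

lemma coordinate_basis_coeffs_eq:
  assumes "coordinate_basis f"
    and "(\<Sum>j\<in>UNIV. l j *\<^sub>R f j) = (\<Sum>j\<in>UNIV. l' j *\<^sub>R f j)"
  shows "l = l'"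
  using assms unfolding coordinate_basis_def by metis

lemma coordinate_basis_uminus:
  assumes "coordinate_basis f"
  shows "coordinate_basis (\<lambda>j. - f j)"
  unfolding coordinate_basis_def
proof
  fix x
  obtain l where l: "x = (\<Sum>j\<in>UNIV. l j *\<^sub>R f j)"
    using assms unfolding coordinate_basis_def by blast
  show "\<exists>!l. x = (\<Sum>j\<in>UNIV. l j *\<^sub>R - f j)"
  proof (rule ex1I)
    show "x = (\<Sum>j\<in>UNIV. (- l j) *\<^sub>R - f j)" using l by simp
  next
    fix l' assume "x = (\<Sum>j\<in>UNIV. l' j *\<^sub>R - f j)"
    then have "(\<Sum>j\<in>UNIV. (- l' j) *\<^sub>R f j) = (\<Sum>j\<in>UNIV. l j *\<^sub>R f j)"
      using l by (simp add: sum_negf)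
    then have "(\<lambda>j. - l' j) = l" by (rule coordinate_basis_coeffs_eq[OF assms])
    then show "l' = (\<lambda>j. - l j)" by auto
  qed
qed

lemma coordinate_basis_inj:
  assumes "coordinate_basis f"
  shows "inj f"
proof (rule injI)
  fix a b assume "f a = f b"
  then have "(\<Sum>j\<in>UNIV. (if j = a then 1 else 0) *\<^sub>R f j) = (\<Sum>j\<in>UNIV. (if j = b then 1 else 0) *\<^sub>R f j)"
    by (simp add: sum_if_eq_scaleR)
  from fun_cong[OF coordinate_basis_coeffs_eq[OF assms this], of a] show "a = b"
    by (simp split: if_splits)
qed

lemma coordinate_basis_neq_uminus:
  assumes "coordinate_basis f"
  shows "f a \<noteq> - f b"
proof
  assume "f a = - f b"
  then have "(\<Sum>j\<in>UNIV. (if j = a then 1 else 0) *\<^sub>R f j) = (\<Sum>j\<in>UNIV. (if j = b then -1 else 0) *\<^sub>R f j)"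
    by (simp add: sum_if_eq_scaleR)
  from fun_cong[OF coordinate_basis_coeffs_eq[OF assms this], of a] show False
    by (simp split: if_splits)
qed

lemma sum_plus_minus_scaleR:
  assumes "coordinate_basis f"
  shows "(\<Sum>e\<in>range f \<union> range (\<lambda>j. - f j). w e *\<^sub>R e) = (\<Sum>j\<in>UNIV. (w (f j) - w (- f j)) *\<^sub>R f j)"
proof -
  have inj: "inj f" "inj (\<lambda>j. - f j)"
    using coordinate_basis_inj[OF assms] by (auto simp: inj_def)
  have "range f \<inter> range (\<lambda>j. - f j) = {}"
    using coordinate_basis_neq_uminus[OF assms] by blast
  then have "(\<Sum>e\<in>range f \<union> range (\<lambda>j. - f j). w e *\<^sub>R e)
      = (\<Sum>j\<in>UNIV. w (f j) *\<^sub>R f j) + (\<Sum>j\<in>UNIV. w (- f j) *\<^sub>R - f j)"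
    by (simp add: sum.union_disjoint sum.reindex[OF inj(1)] sum.reindex[OF inj(2)])
  then show ?thesis
    by (simp add: scaleR_diff_left sum_subtractf sum_negf)
qed

lemma pos_span_plus_minus:
  assumes "coordinate_basis f"
  shows "pos_span (range f \<union> range (\<lambda>j. - f j)) = UNIV"
proof -
  have "x \<in> pos_span (range f \<union> range (\<lambda>j. - f j))" for x
  proof -
    obtain l where l: "x = (\<Sum>j\<in>UNIV. l j *\<^sub>R f j)"
      using assms unfolding coordinate_basis_def by blast
    define w where "w e = (if e \<in> range f then max (l (inv f e)) 0 else max (- l (inv f (- e))) 0)" for e
    have "- f j \<notin> range f" for j
      using coordinate_basis_neq_uminus[OF assms] by (metis imageE)
    then have "w (f j) = max (l j) 0" and "w (- f j) = max (- l j) 0" for j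
      using coordinate_basis_inj[OF assms] by (simp_all add: w_def)
    then have "(\<Sum>e\<in>range f \<union> range (\<lambda>j. - f j). w e *\<^sub>R e) = x"
      unfolding sum_plus_minus_scaleR[OF assms] l by (intro sum.cong) (auto simp: max_def)
    moreover have "\<forall>e\<in>range f \<union> range (\<lambda>j. - f j). 0 \<le> w e" by (simp add: w_def)
    ultimately show ?thesis by (intro pos_spanI)
  qed
  then show ?thesis by auto
qed

lemma basis_vector_notin_pos_span:
  assumes "coordinate_basis f"
  shows "f a \<notin> pos_span ((range f \<union> range (\<lambda>j. - f j)) - {f a})"
proof
  let ?P = "range f \<union> range (\<lambda>j. - f j)"
  assume "f a \<in> pos_span (?P - {f a})"
  then obtain w where w_nonneg: "\<forall>e\<in>?P - {f a}. 0 \<le> w e"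
    and w_sum: "(\<Sum>e\<in>?P - {f a}. w e *\<^sub>R e) = f a"
    by (rule pos_spanE)
  define w' where "w' = w(f a := 0)"
  have "(\<Sum>j\<in>UNIV. (w' (f j) - w' (- f j)) *\<^sub>R f j) = (\<Sum>e\<in>?P. w' e *\<^sub>R e)"
    by (rule sum_plus_minus_scaleR[OF assms, symmetric])
  also have "\<dots> = (\<Sum>e\<in>?P - {f a}. w' e *\<^sub>R e)"
    using sum.remove[of ?P "f a" "\<lambda>e. w' e *\<^sub>R e"] by (simp add: w'_def)
  also have "\<dots> = (\<Sum>e\<in>?P - {f a}. w e *\<^sub>R e)"
    by (rule sum.cong) (auto simp: w'_def)
  also have "\<dots> = (\<Sum>j\<in>UNIV. (if j = a then 1 else 0) *\<^sub>R f j)"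
    unfolding w_sum sum_if_eq_scaleR by simp
  finally have coeffs: "(\<lambda>j. w' (f j) - w' (- f j)) = (\<lambda>j. if j = a then 1 else 0)"
    by (rule coordinate_basis_coeffs_eq[OF assms])
  have neg_ne: "- f a \<noteq> f a"
    using coordinate_basis_neq_uminus[OF assms, of a a] by metis
  from fun_cong[OF coeffs, of a] neg_ne have "w (- f a) = -1"
    by (simp add: w'_def)
  moreover have "0 \<le> w (- f a)"
    using w_nonneg neg_ne by blast
  ultimately show False by simp
qed

lemma positive_basis_plus_minus:
  assumes "coordinate_basis f"
  shows "positive_basis (range f \<union> range (\<lambda>j. - f j))"
proof -
  have "range (\<lambda>j. - f j) \<union> range (\<lambda>j. - (- f j)) = range f \<union> range (\<lambda>j. - f j)"
    by auto
  then have "- f a \<notin> pos_span ((range f \<union> range (\<lambda>j. - f j)) - {- f a})" for a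
    using basis_vector_notin_pos_span[OF coordinate_basis_uminus[OF assms], of a] by simp
  then show ?thesis
    unfolding positive_basis_def
    using pos_span_plus_minus[OF assms] basis_vector_notin_pos_span[OF assms] by auto
qed

lemma Max_inner_plus_minus:
  fixes f :: "'i::finite \<Rightarrow> 'a::real_inner"
  assumes "\<And>j. norm (f j) = 1"
  shows "Max ((\<lambda>d. inner d u / norm d) ` (range f \<union> range (\<lambda>j. - f j)))
    = Max (range (\<lambda>j. \<bar>inner (f j) u\<bar>))"
proof -
  define M where "M = Max (range (\<lambda>j. \<bar>inner (f j) u\<bar>))"
  have image_eq: "(\<lambda>d. inner d u / norm d) ` (range f \<union> range (\<lambda>j. - f j))
      = range (\<lambda>j. inner (f j) u) \<union> range (\<lambda>j. - inner (f j) u)"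
    using assms by (simp add: image_Un image_image)
  have le_M: "\<bar>inner (f j) u\<bar> \<le> M" for j
    unfolding M_def by (rule Max_ge) auto
  have "M \<in> range (\<lambda>j. \<bar>inner (f j) u\<bar>)"
    unfolding M_def by (rule Max_in) auto
  then have "M \<in> range (\<lambda>j. inner (f j) u) \<union> range (\<lambda>j. - inner (f j) u)"
    by (auto simp: abs_if)
  moreover have "y \<le> M" if "y \<in> range (\<lambda>j. inner (f j) u) \<union> range (\<lambda>j. - inner (f j) u)" for y
    using that le_M by (auto simp: abs_le_iff)
  ultimately show ?thesis
    unfolding M_def[symmetric] image_eq by (intro Max_eqI) auto
qed

lemma cosine_measure_plus_minus_eqI:
  fixes f :: "'i::finite \<Rightarrow> 'a::real_inner"
  assumes unit: "\<And>j. norm (f j) = 1"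
    and lower: "\<And>u. norm u = 1 \<Longrightarrow> \<exists>j. c \<le> \<bar>inner (f j) u\<bar>"
    and u0: "norm u0 = 1" and upper: "\<And>j. \<bar>inner (f j) u0\<bar> \<le> c"
  shows "cosine_measure (range f \<union> range (\<lambda>j. - f j)) = c"
proof -
  have lower_Max: "c \<le> Max (range (\<lambda>j. \<bar>inner (f j) u\<bar>))" if "norm u = 1" for u
    using lower[OF that] by (auto simp: Max_ge_iff)
  have "Max (range (\<lambda>j. \<bar>inner (f j) u0\<bar>)) = c"
    using upper lower_Max[OF u0] by (intro antisym) auto
  then show ?thesis
    unfolding cosine_measure_def Max_inner_plus_minus[OF unit]
    using u0 lower_Max by (intro cInf_eq_minimum) force+
qed

lemma col_mat1_minus_ones:
  "col j (mat 1 - \<delta> *\<^sub>R ones_mat) = axis j 1 - \<delta> *\<^sub>R (1 :: real^'n)"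
  by (simp add: vec_eq_iff col_def mat_def ones_mat_def axis_def)

lemma inner_col_mat1_minus_ones:
  "inner (col j (mat 1 - \<delta> *\<^sub>R ones_mat)) u = u $ j - \<delta> * (\<Sum>i\<in>UNIV. u $ i)"
proof -
  have "inner 1 u = (\<Sum>i\<in>UNIV. u $ i)"
    by (simp add: inner_vec_def)
  then show ?thesis
    by (simp add: col_mat1_minus_ones inner_diff_left inner_axis')
qed

lemma norm_col_mat1_minus_ones:
  "norm (col j (mat 1 - \<delta> *\<^sub>R ones_mat :: real^'n^'n)) = sqrt (\<delta>^2 * CARD('n) - 2 * \<delta> + 1)"
proof -
  let ?b = "col j (mat 1 - \<delta> *\<^sub>R ones_mat :: real^'n^'n)"
  have diag: "?b $ j = 1 - \<delta>"
    by (simp add: col_mat1_minus_ones)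
  have sum: "(\<Sum>i\<in>UNIV. ?b $ i) = 1 - \<delta> * CARD('n)"
    by (simp add: col_mat1_minus_ones axis_def sum_subtractf)
  have "inner ?b ?b = \<delta>^2 * CARD('n) - 2 * \<delta> + 1"
    unfolding inner_col_mat1_minus_ones diag sum by (simp add: power2_eq_square algebra_simps)
  then show ?thesis
    by (simp add: norm_eq_sqrt_inner)
qed

lemma scaled_cols_mat1_minus_ones_sum_nth:
  "(\<Sum>j\<in>UNIV. l j *\<^sub>R (a *\<^sub>R col j (mat 1 - \<delta> *\<^sub>R ones_mat))) $ i = a * (l i - \<delta> * sum l UNIV)"
  by (simp add: col_mat1_minus_ones axis_def sum_subtractf sum_distrib_left algebra_simps
      if_distrib[of "\<lambda>s. _ * s"] cong: if_cong)

lemma coordinate_basis_scaled_cols_mat1_minus_ones: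
  fixes a \<delta> :: real
  assumes a: "a \<noteq> 0" and \<delta>: "\<delta> * CARD('n::finite) \<noteq> 1"
  shows "coordinate_basis (\<lambda>j::'n. a *\<^sub>R col j (mat 1 - \<delta> *\<^sub>R ones_mat))"
  unfolding coordinate_basis_def
proof
  fix x :: "real^'n"
  define S where "S = (\<Sum>i\<in>UNIV. x $ i)"
  define y where "y = 1 - \<delta> * CARD('n)"
  have y: "y \<noteq> 0"
    using \<delta> by (simp add: y_def)
  \<comment> \<open>the inverse of \<open>I - \<delta>J\<close> is \<open>I + (\<delta>/y)J\<close>\<close>
  have "x = (\<Sum>j\<in>UNIV. l j *\<^sub>R (a *\<^sub>R col j (mat 1 - \<delta> *\<^sub>R ones_mat)))
      \<longleftrightarrow> l = (\<lambda>i. (x $ i + \<delta> * S / y) / a)" for l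
  proof
    assume x: "x = (\<Sum>j\<in>UNIV. l j *\<^sub>R (a *\<^sub>R col j (mat 1 - \<delta> *\<^sub>R ones_mat)))"
    have x_nth: "x $ i = a * (l i - \<delta> * sum l UNIV)" for i
      unfolding x by (rule scaled_cols_mat1_minus_ones_sum_nth)
    have "S = a * (sum l UNIV - CARD('n) * (\<delta> * sum l UNIV))"
      unfolding S_def x_nth by (simp add: sum_distrib_left[symmetric] sum_subtractf)
    also have "\<dots> = a * y * sum l UNIV"
      by (simp add: y_def algebra_simps)
    finally have "S = a * y * sum l UNIV" .
    then show "l = (\<lambda>i. (x $ i + \<delta> * S / y) / a)"
      using x_nth a y by (auto simp: field_simps)
  next
    assume l: "l = (\<lambda>i. (x $ i + \<delta> * S / y) / a)"
    have "sum l UNIV = (S + CARD('n) * (\<delta> * S / y)) / a"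
      unfolding l S_def by (simp add: sum_divide_distrib[symmetric] sum.distrib)
    also have "\<dots> = S / (a * y)"
      using a y unfolding y_def by (simp add: field_simps)
    finally have "sum l UNIV = S / (a * y)" .
    then show "x = (\<Sum>j\<in>UNIV. l j *\<^sub>R (a *\<^sub>R col j (mat 1 - \<delta> *\<^sub>R ones_mat)))"
      unfolding vec_eq_iff scaled_cols_mat1_minus_ones_sum_nth using l a y by (simp add: field_simps)
  qed
  then show "\<exists>!l. x = (\<Sum>j\<in>UNIV. l j *\<^sub>R (a *\<^sub>R col j (mat 1 - \<delta> *\<^sub>R ones_mat)))"
    by simp
qed

lemma exists_abs_inner_col_mat1_minus_ones_ge:
  fixes u :: "real^'n" and \<delta> :: real
  assumes u: "norm u = 1" and \<delta>: "0 \<le> \<delta>" "\<delta> * CARD('n) \<le> 1"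
  shows "\<exists>j. (1 - \<delta> * CARD('n)) / sqrt CARD('n) \<le> \<bar>inner (col j (mat 1 - \<delta> *\<^sub>R ones_mat)) u\<bar>"
proof (rule ccontr)
  define n where "n = real CARD('n)"
  define S where "S = (\<Sum>i\<in>UNIV. u $ i)"
  define y where "y = 1 - \<delta> * n"
  define v where "v = u - (\<delta> * S) *\<^sub>R 1"
  have n: "0 < n" and y: "0 \<le> y"
    using \<delta> by (simp_all add: n_def y_def)
  assume "\<not> ?thesis"
  then have v_small: "\<bar>v $ j\<bar> < y / sqrt n" for j
    by (simp add: inner_col_mat1_minus_ones v_def y_def n_def S_def not_le)
  have "(v $ j)^2 < (y / sqrt n)^2" for j
    using power_strict_mono[OF v_small abs_ge_zero, of 2] by simp
  then have "(\<Sum>j\<in>UNIV. (v $ j)^2) < (\<Sum>j::'n\<in>UNIV. y^2 / n)"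
    using n by (intro sum_strict_mono) (simp_all add: power_divide)
  also have "\<dots> = y^2"
    using n by (simp add: n_def)
  finally have lt: "(\<Sum>j\<in>UNIV. (v $ j)^2) < y^2" .
  have u_u: "inner u u = 1"
    using u by (simp add: norm_eq_1)
  have one_u: "inner 1 u = S" and one_one: "inner (1::real^'n) 1 = n"
    by (simp_all add: inner_vec_def S_def n_def)
  have S2: "S^2 \<le> n"
    using Cauchy_Schwarz_ineq[of 1 u] by (simp add: one_u one_one u_u)
  have "y^2 = 1 - \<delta> * (2 - \<delta> * n) * n"
    by (simp add: y_def power2_eq_square algebra_simps)
  also have "\<dots> \<le> 1 - \<delta> * (2 - \<delta> * n) * S^2"
    using S2 \<delta> by (intro diff_left_mono mult_left_mono) (simp_all add: n_def)
  also have "\<dots> = inner v v"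
    unfolding v_def by (simp add: inner_diff_left inner_diff_right inner_commute one_u one_one u_u
        power2_eq_square algebra_simps)
  also have "\<dots> = (\<Sum>j\<in>UNIV. (v $ j)^2)"
    by (simp add: inner_vec_def power2_eq_square)
  finally show False
    using lt by simp
qed

lemma norm_uniform_unit_vector: "norm ((1 / sqrt CARD('n)) *\<^sub>R (1 :: real^'n)) = 1"
proof -
  have "norm (1 :: real^'n) = sqrt CARD('n)"
    by (simp add: norm_vec_def L2_set_def)
  then show ?thesis by simp
qed

lemma inner_col_mat1_minus_ones_uniform:
  "inner (col j (mat 1 - \<delta> *\<^sub>R ones_mat)) ((1 / sqrt CARD('n)) *\<^sub>R (1 :: real^'n))
    = (1 - \<delta> * CARD('n)) / sqrt CARD('n)"
  by (simp add: inner_col_mat1_minus_ones field_simps)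

lemma sq_norm_col_mat1_minus_ones_pos:
  fixes \<delta> :: real
  assumes "\<delta> * CARD('n::finite) < 1"
  shows "0 < \<delta>^2 * CARD('n) - 2 * \<delta> + 1"
proof -
  have "CARD('n) * (\<delta>^2 * CARD('n) - 2 * \<delta> + 1) = (1 - \<delta> * CARD('n))^2 + (CARD('n) - 1)"
    by (simp add: power2_eq_square algebra_simps)
  also have "\<dots> > 0"
    using assms by (simp add: add_pos_nonneg Suc_leI)
  finally show ?thesis
    by (simp add: zero_less_mult_iff)
qed

lemma positive_basis_normalized_cols_mat1_minus_ones:
  fixes \<delta> :: real
  assumes \<delta>: "\<delta> * CARD('n::finite) < 1"
  defines "\<alpha> \<equiv> 1 / sqrt (\<delta>^2 * CARD('n) - 2 * \<delta> + 1)"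
  shows "positive_basis (range (\<lambda>j::'n. \<alpha> *\<^sub>R col j (mat 1 - \<delta> *\<^sub>R ones_mat))
    \<union> range (\<lambda>j. - (\<alpha> *\<^sub>R col j (mat 1 - \<delta> *\<^sub>R ones_mat))))"
proof (intro positive_basis_plus_minus coordinate_basis_scaled_cols_mat1_minus_ones)
  show "\<alpha> \<noteq> 0"
    using sq_norm_col_mat1_minus_ones_pos[OF \<delta>] by (simp add: \<alpha>_def)
  show "\<delta> * CARD('n) \<noteq> 1"
    using \<delta> by simp
qed

lemma cosine_measure_normalized_cols_mat1_minus_ones:
  fixes \<delta> :: real
  assumes \<delta>: "0 \<le> \<delta>" "\<delta> * CARD('n::finite) < 1"
  defines "\<alpha> \<equiv> 1 / sqrt (\<delta>^2 * CARD('n) - 2 * \<delta> + 1)"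
  shows "cosine_measure (range (\<lambda>j::'n. \<alpha> *\<^sub>R col j (mat 1 - \<delta> *\<^sub>R ones_mat))
      \<union> range (\<lambda>j. - (\<alpha> *\<^sub>R col j (mat 1 - \<delta> *\<^sub>R ones_mat))))
    = (1 - \<delta> * CARD('n)) / sqrt (CARD('n) * (\<delta>^2 * CARD('n) - 2 * \<delta> + 1))"
    (is "_ = ?c")
proof (rule cosine_measure_plus_minus_eqI)
  have D: "0 < \<delta>^2 * CARD('n) - 2 * \<delta> + 1"
    using sq_norm_col_mat1_minus_ones_pos[OF \<delta>(2)] .
  then have \<alpha>: "0 < \<alpha>"
    by (simp add: \<alpha>_def)
  have c_eq: "?c = \<alpha> * ((1 - \<delta> * CARD('n)) / sqrt CARD('n))"
    by (simp add: \<alpha>_def real_sqrt_mult)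
  show "norm (\<alpha> *\<^sub>R col j (mat 1 - \<delta> *\<^sub>R ones_mat)) = 1" for j :: 'n
    using D by (simp add: norm_col_mat1_minus_ones \<alpha>_def)
  show "\<exists>j. ?c \<le> \<bar>inner (\<alpha> *\<^sub>R col j (mat 1 - \<delta> *\<^sub>R ones_mat)) u\<bar>" if u: "norm u = 1" for u :: "real^'n"
  proof -
    obtain j where "(1 - \<delta> * CARD('n)) / sqrt CARD('n) \<le> \<bar>inner (col j (mat 1 - \<delta> *\<^sub>R ones_mat)) u\<bar>"
      using exists_abs_inner_col_mat1_minus_ones_ge[OF u \<delta>(1)] \<delta>(2) by auto
    then have "?c \<le> \<alpha> * \<bar>inner (col j (mat 1 - \<delta> *\<^sub>R ones_mat)) u\<bar>"
      unfolding c_eq using \<alpha> by (intro mult_left_mono) auto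
    then show ?thesis
      using \<alpha> by (intro exI[of _ j]) (simp add: abs_mult)
  qed
  show "norm ((1 / sqrt CARD('n)) *\<^sub>R (1 :: real^'n)) = 1"
    by (rule norm_uniform_unit_vector)
  show "\<bar>inner (\<alpha> *\<^sub>R col j (mat 1 - \<delta> *\<^sub>R ones_mat)) ((1 / sqrt CARD('n)) *\<^sub>R 1)\<bar> \<le> ?c" for j :: 'n
    using \<delta>(2) \<alpha> unfolding c_eq inner_scaleR_left inner_col_mat1_minus_ones_uniform by (simp add: abs_mult)
qed

lemma delta_of_cosine:
  fixes n c :: real
  assumes n: "2 \<le> n" and c: "0 < c" "c \<le> 1 / sqrt n"
  defines "\<delta> \<equiv> 1 / n + sqrt ((n - 1) * (c^2 - c^4)) / (n * (c^2 - 1))"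
  shows "0 \<le> \<delta>" and "\<delta> * n < 1"
    and "c = (1 - \<delta> * n) / sqrt (n * (\<delta>^2 * n - 2 * \<delta> + 1))"
proof -
  define y where "y = 1 - \<delta> * n"
  have c2_pos: "0 < c^2"
    using c by simp
  have "c^2 \<le> (1 / sqrt n)^2"
    using c by (intro power_mono) auto
  then have c2n: "c^2 * n \<le> 1"
    using n by (simp add: power_divide field_simps)
  moreover have "c^2 * 2 \<le> c^2 * n"
    using n c2_pos by (intro mult_left_mono) auto
  ultimately have c2_lt: "c^2 < 1"
    by linarith
  have y_eq: "y = sqrt ((n - 1) * c^2 * (1 - c^2)) / (1 - c^2)"
    unfolding y_def \<delta>_def using n c2_lt by (simp add: field_simps power4_eq_xxxx power2_eq_square)
  then have y_pos: "0 < y"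
    using n c2_pos c2_lt by simp
  have y2: "y^2 * (1 - c^2) = c^2 * (n - 1)"
    using y_eq n c2_pos c2_lt by (simp add: power_divide power2_eq_square)
  have "y^2 * (1 - c^2) \<le> 1 * (1 - c^2)"
    unfolding y2 using c2n by (simp add: algebra_simps)
  then have "y \<le> 1"
    using c2_lt y_pos by (simp add: power_le_one_iff)
  then show "0 \<le> \<delta>" and "\<delta> * n < 1"
    using y_pos n by (simp_all add: y_def zero_le_mult_iff)
  have "n * (\<delta>^2 * n - 2 * \<delta> + 1) = y^2 + (n - 1)"
    unfolding y_def by (simp add: power2_eq_square algebra_simps)
  also have "\<dots> = c^2 * (y^2 + (n - 1)) / c^2"
    using c2_pos by simp
  also have "\<dots> = y^2 / c^2"
    using y2 by (simp add: algebra_simps)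
  finally have "sqrt (n * (\<delta>^2 * n - 2 * \<delta> + 1)) = y / c"
    using y_pos c by (simp add: real_sqrt_divide)
  then show "c = (1 - \<delta> * n) / sqrt (n * (\<delta>^2 * n - 2 * \<delta> + 1))"
    using y_pos c by (simp add: y_def)
qed

theorem corollary3:
  fixes c :: real
  assumes n2: "CARD('n::finite) \<ge> 2"
    and c_pos: "0 < c" and c_le: "c \<le> 1 / sqrt (real CARD('n))"
  defines "n \<equiv> real CARD('n)"
  defines "\<delta> \<equiv> 1 / n + sqrt ((n - 1) * (c^2 - c^4)) / (n * (c^2 - 1))"
  defines "B \<equiv> (mat 1 :: real^'n^'n) - \<delta> *\<^sub>R ones_mat"
  defines "\<alpha> \<equiv> 1 / sqrt (\<delta>^2 * n - 2 * \<delta> + 1)"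
  defines "P \<equiv> (\<lambda>j. \<alpha> *\<^sub>R col j B) ` UNIV \<union> (\<lambda>j. - (\<alpha> *\<^sub>R col j B)) ` UNIV"
  shows "0 \<le> \<delta> \<and> \<delta> < 1 / n \<and> positive_basis P \<and> cosine_measure P = c"
proof -
  have "2 \<le> n"
    using n2 by (simp add: n_def)
  then have \<delta>: "0 \<le> \<delta>" "\<delta> * n < 1" and c_eq: "c = (1 - \<delta> * n) / sqrt (n * (\<delta>^2 * n - 2 * \<delta> + 1))"
    using delta_of_cosine[of n c] c_pos c_le unfolding \<delta>_def n_def by auto
  have "\<delta> < 1 / n"
    using \<delta>(2) \<open>2 \<le> n\<close> by (simp add: field_simps)
  moreover have "positive_basis P"
    using \<delta>(2) unfolding P_def B_def \<alpha>_def n_def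
    by (rule positive_basis_normalized_cols_mat1_minus_ones)
  moreover have "cosine_measure P = c"
    using \<delta> unfolding P_def B_def \<alpha>_def n_def c_eq
    by (rule cosine_measure_normalized_cols_mat1_minus_ones)
  ultimately show ?thesis
    using \<delta>(1) by blast
qed

end
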